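(* Let $(C(G_i,S_i))_{i\in I}$ be an esperantist family of Cayley graphs of finite groups $G_i$ with symmetric generating sets $S_i$ (of common cardinality), and let $N_i\le G_i$ be subgroups such that $$\log(2[G_i:N_i])\ge\delta\log(2|G_i|)$$ for all $i$, for some $\delta>0$ independent of $i$. Then the family of Cayley–Schreier graphs $(C(G_i/N_i,S_i))_{i\in I}$ is also an esperantist family.
   Context: For a group $G$ with finite symmetric generating set $S$ and subgroup $H$, $C(G/H,S)$ is the $|S|$-regular graph (loops and multiple edges allowed) with vertex set $G/H$ and an edge from $xH$ to $sxH$ for each $s\in S$; for $H=1$ this is the Cayley graph $C(G,S)$. For a connected $r$-regular graph $\Gamma$, $\lambda_1(\Gamma)$ is the smallest nonzero eigenvalue of $r\,\mathrm{Id}-A(\Gamma)$. A family $(\Gamma_i)$ of connected $r$-regular graphs is esperantist if for every $N$ only finitely many $i$ have at most $N$ vertices, and there exist $c>0$, $A\ge0$ with $\lambda_1(\Gamma_i)\ge c/(\log 2|\Gamma_i|)^A$ for all $i$. *)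

theory Defs
  imports Complex_Main "HOL-Algebra.Algebra"
begin

text \<open>A graph is given by a vertex set V and an adjacency function A, where A u v is
  the number of edges from u to v (loops and multiple edges allowed).\<close>

definition regular_graph :: "'v set \<Rightarrow> ('v \<Rightarrow> 'v \<Rightarrow> nat) \<Rightarrow> nat \<Rightarrow> bool" where
  "regular_graph V A r \<longleftrightarrow> finite V \<and> V \<noteq> {} \<and>
     (\<forall>u\<in>V. \<forall>w\<in>V. A u w = A w u) \<and>
     (\<forall>u\<in>V. \<forall>w. 0 < A u w \<longrightarrow> w \<in> V) \<and>
     (\<forall>v\<in>V. (\<Sum>w\<in>V. A v w) = r)"

definition connected_graph :: "'v set \<Rightarrow> ('v \<Rightarrow> 'v \<Rightarrow> nat) \<Rightarrow> bool" where
  "connected_graph V A \<longleftrightarrow>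
     (\<forall>u\<in>V. \<forall>v\<in>V. (u, v) \<in> {(x, y). x \<in> V \<and> y \<in> V \<and> 0 < A x y}\<^sup>*)"

definition lap_eigenvalue :: "'v set \<Rightarrow> ('v \<Rightarrow> 'v \<Rightarrow> nat) \<Rightarrow> nat \<Rightarrow> real \<Rightarrow> bool" where
  "lap_eigenvalue V A r mu \<longleftrightarrow>
     (\<exists>f :: 'v \<Rightarrow> real. (\<exists>v\<in>V. f v \<noteq> 0) \<and>
        (\<forall>v\<in>V. real r * f v - (\<Sum>w\<in>V. real (A v w) * f w) = mu * f v))"

definition lambda1 :: "'v set \<Rightarrow> ('v \<Rightarrow> 'v \<Rightarrow> nat) \<Rightarrow> nat \<Rightarrow> real" where
  "lambda1 V A r = Min {mu. lap_eigenvalue V A r mu \<and> mu \<noteq> 0}"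

text \<open>The spectral bound is only required for graphs with at least two vertices, since a
  one-vertex graph has no nonzero Laplacian eigenvalue.\<close>
definition esperantist :: "'i set \<Rightarrow> ('i \<Rightarrow> 'v set) \<Rightarrow> ('i \<Rightarrow> 'v \<Rightarrow> 'v \<Rightarrow> nat) \<Rightarrow> nat \<Rightarrow> bool" where
  "esperantist I V A r \<longleftrightarrow>
     (\<forall>i\<in>I. regular_graph (V i) (A i) r \<and> connected_graph (V i) (A i)) \<and>
     (\<forall>n::nat. finite {i \<in> I. card (V i) \<le> n}) \<and>
     (\<exists>c::real. \<exists>a::real. c > 0 \<and> a \<ge> 0 \<and>
        (\<forall>i\<in>I. card (V i) \<ge> 2 \<longrightarrow>
           lambda1 (V i) (A i) r \<ge> c / (ln (2 * real (card (V i)))) powr a))"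

definition schreier_vertices :: "('g, 'b) monoid_scheme \<Rightarrow> 'g set \<Rightarrow> 'g set set" where
  "schreier_vertices G H = lcosets\<^bsub>G\<^esub> H"

definition schreier_adj :: "('g, 'b) monoid_scheme \<Rightarrow> 'g set \<Rightarrow> 'g set \<Rightarrow> 'g set \<Rightarrow> nat" where
  "schreier_adj G S u v = card {s \<in> S. s <#\<^bsub>G\<^esub> u = v}"

definition cayley_vertices :: "('g, 'b) monoid_scheme \<Rightarrow> 'g set set" where
  "cayley_vertices G = schreier_vertices G {\<one>\<^bsub>G\<^esub>}"

definition symmetric_generating_set :: "('g, 'b) monoid_scheme \<Rightarrow> 'g set \<Rightarrow> bool" where
  "symmetric_generating_set G S \<longleftrightarrow> finite S \<and> S \<subseteq> carrier G \<and>
     (\<forall>s\<in>S. inv\<^bsub>G\<^esub> s \<in> S) \<and> generate G S = carrier G"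

end

theory Submission
  imports Defs "Jordan_Normal_Form.Spectral_Radius"
begin

(* The Schreier graph C(G/N,S) is a quotient of the Cayley graph C(G,S): the
   adjacency operator of any Schreier graph acts by (A f)(u) = sum_{s in S} f(s u).  Hence
   the Schreier graph is again r-regular and connected, and pulling a Laplacian eigenfunction
   of C(G/N,S) back along G -> G/N gives an eigenfunction of C(G,S) with the same eigenvalue.
   So every nonzero eigenvalue of the quotient is one of the Cayley graph, and
   lambda_1(G/N) >= lambda_1(G), provided the quotient has a nonzero eigenvalue at all.
   The latter is the spectral part of the file: the Laplacian of a connected regular graph
   with at least two vertices has a nonzero eigenvalue.  We obtain a complex eigenvector on
   the invariant subspace of zero-sum functions (via the matrix library), show that its
   eigenvalue is real by symmetry, and that it is nonzero by the maximum principle.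
   Finally, the index hypothesis log(2[G:N]) >= delta log(2|G|) turns the esperantist
   bound c/log(2|G|)^A into c delta^A/log(2[G:N])^A and transfers the finiteness of
   sublevel sets from the Cayley graphs to the Schreier graphs. *)

definition eigenfunction ::
    "'v set \<Rightarrow> ('v \<Rightarrow> 'v \<Rightarrow> 'a::comm_ring_1) \<Rightarrow> 'a \<Rightarrow> ('v \<Rightarrow> 'a) \<Rightarrow> bool" where
  "eigenfunction W F \<mu> f \<longleftrightarrow>
     (\<exists>v\<in>W. f v \<noteq> 0) \<and> (\<forall>u\<in>W. (\<Sum>w\<in>W. F u w * f w) = \<mu> * f u)"

(* Eigenfunctions of a kernel are eigenvectors of its matrix under any enumeration of W;
   this transfers the finiteness and existence results of the matrix library. *)
lemma eigenfunction_iff_matrix: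
  fixes F :: "'v \<Rightarrow> 'v \<Rightarrow> 'a::field"
  assumes h: "bij_betw h {0..<n} W"
  shows "(\<exists>f. eigenfunction W F \<mu> f) \<longleftrightarrow> eigenvalue (mat n n (\<lambda>(i, j). F (h i) (h j))) \<mu>"
    (is "_ \<longleftrightarrow> eigenvalue ?M \<mu>")
proof
  assume "\<exists>f. eigenfunction W F \<mu> f"
  then obtain f where f0: "\<exists>v\<in>W. f v \<noteq> 0" and fe: "\<forall>u\<in>W. (\<Sum>w\<in>W. F u w * f w) = \<mu> * f u"
    unfolding eigenfunction_def by blast
  define x where "x = vec n (\<lambda>i. f (h i))"
  have "x \<noteq> 0\<^sub>v n"
  proof
    assume "x = 0\<^sub>v n"
    from f0 obtain i where "i < n" "f (h i) \<noteq> 0" using h unfolding bij_betw_def by auto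
    with \<open>x = 0\<^sub>v n\<close> show False unfolding x_def by (metis index_vec index_zero_vec(1))
  qed
  moreover have "?M *\<^sub>v x = \<mu> \<cdot>\<^sub>v x"
  proof (rule eq_vecI)
    fix i assume "i < dim_vec (\<mu> \<cdot>\<^sub>v x)"
    hence i: "i < n" unfolding x_def by simp
    have "(?M *\<^sub>v x) $ i = (\<Sum>j\<in>{0..<n}. F (h i) (h j) * f (h j))"
      using i unfolding x_def by (simp add: scalar_prod_def row_def)
    also have "\<dots> = (\<Sum>w\<in>W. F (h i) w * f w)" by (rule sum.reindex_bij_betw[OF h])
    also have "\<dots> = \<mu> * f (h i)" using fe h i unfolding bij_betw_def by auto
    finally show "(?M *\<^sub>v x) $ i = (\<mu> \<cdot>\<^sub>v x) $ i" using i unfolding x_def by simp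
  qed (simp add: x_def)
  moreover have "x \<in> carrier_vec n" unfolding x_def by simp
  ultimately show "eigenvalue ?M \<mu>" unfolding eigenvalue_def eigenvector_def by auto
next
  assume "eigenvalue ?M \<mu>"
  then obtain x where xc: "x \<in> carrier_vec n" and xn: "x \<noteq> 0\<^sub>v n" and ev: "?M *\<^sub>v x = \<mu> \<cdot>\<^sub>v x"
    unfolding eigenvalue_def eigenvector_def by auto
  define f where "f w = x $ inv_into {0..<n} h w" for w
  have fh: "f (h i) = x $ i" if "i < n" for i
    unfolding f_def using h that by (simp add: bij_betw_def inv_into_f_f)
  have "\<exists>v\<in>W. f v \<noteq> 0"
  proof (rule ccontr)
    assume "\<not> (\<exists>v\<in>W. f v \<noteq> 0)"
    hence "\<forall>i<n. x $ i = 0" using fh h unfolding bij_betw_def by force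
    hence "x = 0\<^sub>v n" using xc by (intro eq_vecI) auto
    with xn show False by simp
  qed
  moreover have "(\<Sum>w\<in>W. F u w * f w) = \<mu> * f u" if u: "u \<in> W" for u
  proof -
    obtain i where i: "i < n" "h i = u" using h u unfolding bij_betw_def by auto
    have "(\<Sum>w\<in>W. F u w * f w) = (\<Sum>j\<in>{0..<n}. F (h i) (h j) * x $ j)"
      using sum.reindex_bij_betw[OF h, of "\<lambda>w. F u w * f w"] fh i by simp
    also have "\<dots> = (?M *\<^sub>v x) $ i" using i xc by (simp add: scalar_prod_def row_def)
    also have "\<dots> = \<mu> * f u" using ev i xc fh[OF i(1)] by simp
    finally show ?thesis .
  qed
  ultimately show "\<exists>f. eigenfunction W F \<mu> f" unfolding eigenfunction_def by blast
qed

lemma eigenvalues_finite: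
  fixes F :: "'v \<Rightarrow> 'v \<Rightarrow> 'a::field"
  assumes "finite W"
  shows "finite {\<mu>. \<exists>f. eigenfunction W F \<mu> f}"
proof -
  obtain h where h: "bij_betw h {0..<card W} W" using ex_bij_betw_nat_finite[OF assms] by blast
  have "finite (spectrum (mat (card W) (card W) (\<lambda>(i, j). F (h i) (h j))))"
    by (rule card_finite_spectrum[of _ "card W"]) simp
  thus ?thesis unfolding spectrum_def eigenfunction_iff_matrix[OF h] by simp
qed

lemma eigenfunction_exists:
  fixes F :: "'v \<Rightarrow> 'v \<Rightarrow> complex"
  assumes "finite W" "W \<noteq> {}"
  shows "\<exists>\<mu> f. eigenfunction W F \<mu> f"
proof -
  obtain h where h: "bij_betw h {0..<card W} W" using ex_bij_betw_nat_finite[OF assms(1)] by blast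
  have "spectrum (mat (card W) (card W) (\<lambda>(i, j). F (h i) (h j))) \<noteq> {}"
    by (rule spectrum_non_empty) (use assms in auto)
  thus ?thesis unfolding spectrum_def eigenfunction_iff_matrix[OF h] by auto
qed

definition laplacian :: "('v \<Rightarrow> 'v \<Rightarrow> nat) \<Rightarrow> nat \<Rightarrow> 'v \<Rightarrow> 'v \<Rightarrow> real" where
  "laplacian A r u w = (if u = w then real r else 0) - real (A u w)"

lemma laplacian_apply:
  assumes "finite V" "u \<in> V"
  shows "(\<Sum>w\<in>V. laplacian A r u w * f w) = real r * f u - (\<Sum>w\<in>V. real (A u w) * f w)"
proof -
  have "(\<Sum>w\<in>V. laplacian A r u w * f w)
      = (\<Sum>w\<in>V. if u = w then real r * f w else 0) - (\<Sum>w\<in>V. real (A u w) * f w)"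
    unfolding laplacian_def sum_subtractf[symmetric] by (intro sum.cong) (auto simp: algebra_simps)
  with assms show ?thesis by (simp add: sum.delta)
qed

lemma lap_eigenvalue_iff:
  assumes "finite V"
  shows "lap_eigenvalue V A r \<mu> \<longleftrightarrow> (\<exists>f. eigenfunction V (laplacian A r) \<mu> f)"
  unfolding lap_eigenvalue_def eigenfunction_def using laplacian_apply[OF assms] by simp

lemma lap_eigenvalues_finite:
  assumes "finite V"
  shows "finite {\<mu>. lap_eigenvalue V A r \<mu> \<and> \<mu> \<noteq> 0}"
  by (rule finite_subset[OF _ eigenvalues_finite[OF assms, of "laplacian A r"]])
     (auto simp: lap_eigenvalue_iff[OF assms])

lemma regular_row_sum:
  assumes "regular_graph V A r" "u \<in> V"
  shows "(\<Sum>w\<in>V. real (A u w)) = real r"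
  using assms unfolding regular_graph_def by (metis of_nat_sum)

lemma laplacian_sym:
  assumes "regular_graph V A r" "u \<in> V" "w \<in> V"
  shows "laplacian A r u w = laplacian A r w u"
  using assms unfolding regular_graph_def laplacian_def by auto

(* By symmetry, the columns of the Laplacian of a regular graph sum to zero: it maps
   every function to a zero-sum function. *)
lemma laplacian_column_sum:
  assumes reg: "regular_graph V A r" and w: "w \<in> V"
  shows "(\<Sum>u\<in>V. laplacian A r u w) = 0"
proof -
  have fin: "finite V" using reg unfolding regular_graph_def by auto
  have "(\<Sum>u\<in>V. laplacian A r u w) = (\<Sum>u\<in>V. laplacian A r w u * 1)"
    using laplacian_sym[OF reg _ w] by simp
  also have "\<dots> = 0" using laplacian_apply[OF fin w, of A r "\<lambda>_. 1"] regular_row_sum[OF reg w] by simp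
  finally show ?thesis .
qed

definition zero_sum_extension :: "'v set \<Rightarrow> 'v \<Rightarrow> ('v \<Rightarrow> 'a::ab_group_add) \<Rightarrow> 'v \<Rightarrow> 'a" where
  "zero_sum_extension V v0 y w = (if w = v0 then - (\<Sum>x\<in>V - {v0}. y x) else y w)"

(* Restriction to zero-sum functions: if the column sums of F vanish, then zero-sum
   functions on V correspond to arbitrary functions on V - {v0}, and F acts on them through
   the kernel F u w - F u v0. *)
lemma deflated_eigenfunction:
  fixes F :: "'v \<Rightarrow> 'v \<Rightarrow> 'a::comm_ring_1"
  assumes fin: "finite V" and v0: "v0 \<in> V"
    and cols: "\<forall>w\<in>V. (\<Sum>u\<in>V. F u w) = 0"
    and eig: "\<forall>u\<in>V - {v0}. (\<Sum>w\<in>V - {v0}. (F u w - F u v0) * y w) = \<mu> * y u"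
  defines "e \<equiv> zero_sum_extension V v0 y"
  shows "\<forall>u\<in>V. (\<Sum>w\<in>V. F u w * e w) = \<mu> * e u" and "(\<Sum>w\<in>V. e w) = 0"
proof -
  let ?W = "V - {v0}"
  have split: "(\<Sum>w\<in>V. g w) = g v0 + (\<Sum>w\<in>?W. g w)" for g :: "'v \<Rightarrow> 'a"
    by (rule sum.remove[OF fin v0])
  have off: "(\<Sum>w\<in>V. F u w * e w) = \<mu> * e u" if u: "u \<in> ?W" for u
  proof -
    have "(\<Sum>w\<in>V. F u w * e w) = (\<Sum>w\<in>?W. (F u w - F u v0) * y w)"
      unfolding split e_def zero_sum_extension_def by (simp add: sum_distrib_left algebra_simps sum_subtractf)
    also have "\<dots> = \<mu> * e u" using eig u unfolding e_def zero_sum_extension_def by simp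
    finally show ?thesis .
  qed
  have "(\<Sum>u\<in>V. \<Sum>w\<in>V. F u w * e w) = (\<Sum>w\<in>V. e w * (\<Sum>u\<in>V. F u w))"
    by (subst sum.swap) (simp add: sum_distrib_left mult.commute)
  also have "\<dots> = 0" using cols by simp
  finally have "(\<Sum>w\<in>V. F v0 w * e w) = - (\<Sum>u\<in>?W. \<mu> * e u)"
    using off unfolding split[of "\<lambda>u. \<Sum>w\<in>V. F u w * e w"] by (simp add: eq_neg_iff_add_eq_0)
  also have "\<dots> = \<mu> * e v0" unfolding e_def zero_sum_extension_def by (simp add: sum_distrib_left)
  finally show "\<forall>u\<in>V. (\<Sum>w\<in>V. F u w * e w) = \<mu> * e u" using off by blast
  show "(\<Sum>w\<in>V. e w) = 0" unfolding split e_def zero_sum_extension_def by simp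
qed

lemma real_symmetric_eigenfunction:
  fixes F :: "'v \<Rightarrow> 'v \<Rightarrow> real" and f :: "'v \<Rightarrow> complex"
  assumes fin: "finite V" and sym: "\<And>u w. u \<in> V \<Longrightarrow> w \<in> V \<Longrightarrow> F u w = F w u"
    and eig: "eigenfunction V (\<lambda>u w. complex_of_real (F u w)) \<mu> f"
  shows "Im \<mu> = 0"
    and "\<forall>u\<in>V. (\<Sum>w\<in>V. F u w * Re (f w)) = Re \<mu> * Re (f u)"
    and "\<forall>u\<in>V. (\<Sum>w\<in>V. F u w * Im (f w)) = Re \<mu> * Im (f u)"
proof -
  have fe: "(\<Sum>w\<in>V. of_real (F u w) * f w) = \<mu> * f u" if "u \<in> V" for u
    using eig that unfolding eigenfunction_def by blast
  obtain v where v: "v \<in> V" "f v \<noteq> 0" using eig unfolding eigenfunction_def by blast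
  define q where "q = (\<Sum>u\<in>V. (norm (f u))\<^sup>2)"
  have "q > 0" unfolding q_def by (rule sum_pos2[OF fin v(1)]) (use v in auto)
  have norm_sq: "(\<Sum>u\<in>V. cnj (f u) * f u) = of_real q"
    unfolding q_def of_real_sum complex_norm_square by (simp add: mult.commute)
  have "\<mu> * of_real q = (\<Sum>u\<in>V. cnj (f u) * (\<mu> * f u))"
    by (simp add: norm_sq[symmetric] sum_distrib_left mult_ac)
  also have "\<dots> = (\<Sum>u\<in>V. cnj (f u) * (\<Sum>w\<in>V. of_real (F u w) * f w))"
    by (intro sum.cong refl) (simp add: fe)
  also have "\<dots> = (\<Sum>u\<in>V. \<Sum>w\<in>V. cnj (f u) * (of_real (F u w) * f w))"
    by (simp add: sum_distrib_left)
  also have "\<dots> = (\<Sum>w\<in>V. \<Sum>u\<in>V. cnj (f u) * (of_real (F u w) * f w))"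
    by (rule sum.swap)
  also have "\<dots> = (\<Sum>w\<in>V. f w * cnj (\<Sum>u\<in>V. of_real (F w u) * f u))"
    by (intro sum.cong refl) (simp add: sum_distrib_left sym mult_ac)
  also have "\<dots> = (\<Sum>w\<in>V. f w * cnj (\<mu> * f w))"
    by (intro sum.cong refl) (simp add: fe)
  also have "\<dots> = cnj \<mu> * of_real q"
    by (simp add: norm_sq[symmetric] sum_distrib_left mult_ac)
  finally have "\<mu> = cnj \<mu>" using \<open>q > 0\<close> by simp
  thus im0: "Im \<mu> = 0" by (simp add: complex_eq_iff)
  show "\<forall>u\<in>V. (\<Sum>w\<in>V. F u w * Re (f w)) = Re \<mu> * Re (f u)"
  proof
    fix u assume "u \<in> V"
    from arg_cong[where f = Re, OF fe[OF this]] im0 show "(\<Sum>w\<in>V. F u w * Re (f w)) = Re \<mu> * Re (f u)"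
      by simp
  qed
  show "\<forall>u\<in>V. (\<Sum>w\<in>V. F u w * Im (f w)) = Re \<mu> * Im (f u)"
  proof
    fix u assume "u \<in> V"
    from arg_cong[where f = Im, OF fe[OF this]] im0 show "(\<Sum>w\<in>V. F u w * Im (f w)) = Re \<mu> * Im (f u)"
      by simp
  qed
qed

(* Maximum principle: a function with the mean value property on a connected regular
   graph is constant, since the set where it attains its maximum is closed under edges. *)
lemma harmonic_constant:
  assumes reg: "regular_graph V A r" and conn: "connected_graph V A"
    and harm: "\<And>u. u \<in> V \<Longrightarrow> (\<Sum>w\<in>V. real (A u w) * k w) = real r * k u"
    and u: "u \<in> V" and v: "v \<in> V"
  shows "k u = k v"
proof -
  have fin: "finite V" and ne: "V \<noteq> {}" using reg unfolding regular_graph_def by auto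
  define m where "m = Max (k ` V)"
  have le: "k w \<le> m" if "w \<in> V" for w unfolding m_def using fin that by simp
  have "m \<in> k ` V" unfolding m_def using fin ne by simp
  then obtain u0 where u0: "u0 \<in> V" "k u0 = m" by auto
  have step: "k y = m" if x: "x \<in> V" "k x = m" and y: "y \<in> V" "0 < A x y" for x y
  proof -
    have "(\<Sum>w\<in>V. real (A x w) * (m - k w)) = m * (\<Sum>w\<in>V. real (A x w)) - real r * k x"
      by (simp add: harm[OF x(1), symmetric] sum_distrib_left sum_subtractf algebra_simps)
    also have "\<dots> = 0" using regular_row_sum[OF reg x(1)] x(2) by simp
    finally have "(\<Sum>w\<in>V. real (A x w) * (m - k w)) = 0" .
    hence "real (A x y) * (m - k y) = 0" using fin y(1) le by (simp add: sum_nonneg_eq_0_iff)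
    thus ?thesis using y(2) by simp
  qed
  have "k w = m" if "w \<in> V" for w
  proof -
    have "(u0, w) \<in> {(x, y). x \<in> V \<and> y \<in> V \<and> 0 < A x y}\<^sup>*"
      using conn u0(1) that unfolding connected_graph_def by blast
    thus ?thesis by induction (use u0 step in auto)
  qed
  with u v show ?thesis by simp
qed

(* Consequently a zero-sum Laplacian eigenfunction has a nonzero eigenvalue: eigenvalue 0
   would make it constant, hence zero. *)
lemma mean_zero_eigenvalue_nonzero:
  assumes reg: "regular_graph V A r" and conn: "connected_graph V A"
    and eig: "eigenfunction V (laplacian A r) \<alpha> k" and mean: "(\<Sum>w\<in>V. k w) = 0"
  shows "\<alpha> \<noteq> 0"
proof
  assume "\<alpha> = 0"
  have fin: "finite V" using reg unfolding regular_graph_def by auto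
  obtain v where v: "v \<in> V" "k v \<noteq> 0" using eig unfolding eigenfunction_def by blast
  have "(\<Sum>w\<in>V. real (A u w) * k w) = real r * k u" if "u \<in> V" for u
    using eig that laplacian_apply[OF fin that, of A r k] \<open>\<alpha> = 0\<close> unfolding eigenfunction_def by auto
  hence const: "k w = k v" if "w \<in> V" for w
    using harmonic_constant[OF reg conn _ that v(1)] by blast
  have "(\<Sum>w\<in>V. k w) = real (card V) * k v" using const by simp
  moreover have "card V > 0" using fin v(1) by (auto simp: card_gt_0_iff)
  ultimately show False using mean v(2) by simp
qed

(* The Laplacian of a connected regular graph with at least two vertices has a nonzero
   eigenvalue, so its lambda1 is a genuine minimum. *)
lemma nonzero_lap_eigenvalue_exists:
  assumes reg: "regular_graph V A r" and conn: "connected_graph V A" and card2: "2 \<le> card V"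
  shows "\<exists>\<mu>. lap_eigenvalue V A r \<mu> \<and> \<mu> \<noteq> 0"
proof -
  have fin: "finite V" and "V \<noteq> {}" using reg unfolding regular_graph_def by auto
  then obtain v0 where v0: "v0 \<in> V" by blast
  let ?W = "V - {v0}"
  have "?W \<noteq> {}"
  proof
    assume "?W = {}"
    hence "V \<subseteq> {v0}" by blast
    with card2 show False using card_mono[of "{v0}" V] by simp
  qed
  let ?L = "\<lambda>u w. complex_of_real (laplacian A r u w)"
  obtain \<nu> y where y: "eigenfunction ?W (\<lambda>u w. ?L u w - ?L u v0) \<nu> y"
    using eigenfunction_exists[of ?W] fin \<open>?W \<noteq> {}\<close> by blast
  define e where "e = zero_sum_extension V v0 y"
  have cols: "\<forall>w\<in>V. (\<Sum>u\<in>V. ?L u w) = 0"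
    unfolding of_real_sum[symmetric] using laplacian_column_sum[OF reg] by simp
  have "\<forall>u\<in>?W. (\<Sum>w\<in>?W. (?L u w - ?L u v0) * y w) = \<nu> * y u"
    using y unfolding eigenfunction_def by blast
  note deflated = deflated_eigenfunction[OF fin v0 cols this, folded e_def]
  have eig_e: "\<forall>u\<in>V. (\<Sum>w\<in>V. ?L u w * e w) = \<nu> * e u" by (rule deflated(1))
  have mean_e: "(\<Sum>w\<in>V. e w) = 0" by (rule deflated(2))
  have "\<exists>v\<in>V. e v \<noteq> 0" using y unfolding eigenfunction_def e_def zero_sum_extension_def by auto
  hence "eigenfunction V ?L \<nu> e" using eig_e unfolding eigenfunction_def by blast
  note real_eig = real_symmetric_eigenfunction[OF fin laplacian_sym[OF reg] this]
  have "\<exists>g. eigenfunction V (laplacian A r) (Re \<nu>) g \<and> (\<Sum>w\<in>V. g w) = 0"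
  proof (cases "\<exists>v\<in>V. Re (e v) \<noteq> 0")
    case True
    moreover have "(\<Sum>w\<in>V. Re (e w)) = 0" using arg_cong[OF mean_e, of Re] by simp
    moreover have "\<forall>u\<in>V. (\<Sum>w\<in>V. laplacian A r u w * Re (e w)) = Re \<nu> * Re (e u)"
      by (rule real_eig(2))
    ultimately show ?thesis unfolding eigenfunction_def by (intro exI[of _ "\<lambda>w. Re (e w)"]) simp
  next
    case False
    with \<open>\<exists>v\<in>V. e v \<noteq> 0\<close> have "\<exists>v\<in>V. Im (e v) \<noteq> 0" by (auto simp: complex_eq_iff)
    moreover have "(\<Sum>w\<in>V. Im (e w)) = 0" using arg_cong[OF mean_e, of Im] by simp
    moreover have "\<forall>u\<in>V. (\<Sum>w\<in>V. laplacian A r u w * Im (e w)) = Re \<nu> * Im (e u)"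
      by (rule real_eig(3))
    ultimately show ?thesis unfolding eigenfunction_def by (intro exI[of _ "\<lambda>w. Im (e w)"]) simp
  qed
  then obtain g where g: "eigenfunction V (laplacian A r) (Re \<nu>) g" and "(\<Sum>w\<in>V. g w) = 0" by blast
  hence "Re \<nu> \<noteq> 0" by (rule mean_zero_eigenvalue_nonzero[OF reg conn])
  with g show ?thesis using lap_eigenvalue_iff[OF fin] by blast
qed

lemma lambda1_antimono:
  assumes fin': "finite V'" and reg: "regular_graph V A r" and conn: "connected_graph V A"
    and card2: "2 \<le> card V"
    and sub: "\<And>\<mu>. lap_eigenvalue V A r \<mu> \<Longrightarrow> lap_eigenvalue V' A' r \<mu>"
  shows "lambda1 V' A' r \<le> lambda1 V A r"
  unfolding lambda1_def
  by (rule Min_antimono)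
     (use sub nonzero_lap_eigenvalue_exists[OF reg conn card2] lap_eigenvalues_finite[OF fin'] in auto)

lemma fiber_sum:
  fixes F :: "'w \<Rightarrow> real"
  assumes finV: "finite V" and finS: "finite S" and img: "g ` S \<subseteq> V"
  shows "(\<Sum>w\<in>V. real (card {s\<in>S. g s = w}) * F w) = (\<Sum>s\<in>S. F (g s))"
proof -
  have "(\<Sum>s\<in>S. F (g s)) = (\<Sum>s\<in>S. \<Sum>w\<in>V. if g s = w then F w else 0)"
    using img finV by (intro sum.cong refl) (auto simp: sum.delta)
  also have "\<dots> = (\<Sum>w\<in>V. \<Sum>s\<in>S. if g s = w then F w else 0)" by (rule sum.swap)
  also have "\<dots> = (\<Sum>w\<in>V. real (card {s\<in>S. g s = w}) * F w)"
    using finS by (simp add: sum.If_cases Int_def)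
  finally show ?thesis by simp
qed

lemma lcoset_in_lcosets:
  assumes grp: "group G" and H: "subgroup H G" and u: "u \<in> lcosets\<^bsub>G\<^esub> H"
    and s: "s \<in> carrier G"
  shows "s <#\<^bsub>G\<^esub> u \<in> lcosets\<^bsub>G\<^esub> H"
proof -
  obtain x where x: "x \<in> carrier G" "u = x <#\<^bsub>G\<^esub> H" using u unfolding LCOSETS_def by blast
  have "s <#\<^bsub>G\<^esub> u = (s \<otimes>\<^bsub>G\<^esub> x) <#\<^bsub>G\<^esub> H"
    using group.lcos_m_assoc[OF grp subgroup.subset[OF H] s x(1)] x(2) by simp
  moreover have "s \<otimes>\<^bsub>G\<^esub> x \<in> carrier G" using grp s x by (simp add: group.is_monoid monoid.m_closed)
  ultimately show ?thesis unfolding LCOSETS_def by blast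
qed

lemma lcoset_inv_cancel:
  assumes grp: "group G" and M: "M \<subseteq> carrier G" and s: "s \<in> carrier G"
  shows "inv\<^bsub>G\<^esub> s <#\<^bsub>G\<^esub> (s <#\<^bsub>G\<^esub> M) = M"
  using group.lcos_m_assoc[OF grp M group.inv_closed[OF grp s] s] group.lcos_mult_one[OF grp M]
    group.l_inv[OF grp s] by simp

lemma lcoset_singleton: "s <#\<^bsub>G\<^esub> {x} = {s \<otimes>\<^bsub>G\<^esub> x}"
  by (simp add: l_coset_def)

lemma schreier_vertices_finite:
  assumes "finite (carrier G)"
  shows "finite (schreier_vertices G H)"
  using assms unfolding schreier_vertices_def LCOSETS_def by auto

lemma schreier_adj_pos_iff:
  assumes "finite S"
  shows "0 < schreier_adj G S u w \<longleftrightarrow> (\<exists>s\<in>S. s <#\<^bsub>G\<^esub> u = w)"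
  using assms unfolding schreier_adj_def by (auto simp: card_gt_0_iff)

lemma schreier_adj_apply:
  fixes f :: "'g set \<Rightarrow> real"
  assumes grp: "group G" and fin: "finite (carrier G)" and SG: "S \<subseteq> carrier G" and finS: "finite S"
    and H: "subgroup H G" and u: "u \<in> schreier_vertices G H"
  shows "(\<Sum>w\<in>schreier_vertices G H. real (schreier_adj G S u w) * f w) = (\<Sum>s\<in>S. f (s <#\<^bsub>G\<^esub> u))"
  unfolding schreier_adj_def
proof (rule fiber_sum[OF schreier_vertices_finite[OF fin] finS])
  show "(\<lambda>s. s <#\<^bsub>G\<^esub> u) ` S \<subseteq> schreier_vertices G H"
    using lcoset_in_lcosets[OF grp H] u SG unfolding schreier_vertices_def by blast
qed

(* s |-> s^-1 is a bijection between the edges u -> w and w -> u, as S is symmetric. *)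
lemma schreier_adj_sym:
  assumes grp: "group G" and sg: "symmetric_generating_set G S"
    and u: "u \<subseteq> carrier G" and w: "w \<subseteq> carrier G"
  shows "schreier_adj G S u w = schreier_adj G S w u"
proof -
  have SG: "S \<subseteq> carrier G" and Sinv: "\<forall>s\<in>S. inv\<^bsub>G\<^esub> s \<in> S"
    using sg unfolding symmetric_generating_set_def by auto
  have inv_inv: "inv\<^bsub>G\<^esub> (inv\<^bsub>G\<^esub> s) = s" if "s \<in> S" for s
    using that SG group.inv_inv[OF grp] by blast
  have "bij_betw (\<lambda>s. inv\<^bsub>G\<^esub> s) {s\<in>S. s <#\<^bsub>G\<^esub> u = w} {s\<in>S. s <#\<^bsub>G\<^esub> w = u}"
  proof (rule bij_betw_byWitness[where f' = "\<lambda>s. inv\<^bsub>G\<^esub> s"])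
    show "(\<lambda>s. inv\<^bsub>G\<^esub> s) ` {s\<in>S. s <#\<^bsub>G\<^esub> u = w} \<subseteq> {s\<in>S. s <#\<^bsub>G\<^esub> w = u}"
      using lcoset_inv_cancel[OF grp u] SG Sinv by auto
    show "(\<lambda>s. inv\<^bsub>G\<^esub> s) ` {s\<in>S. s <#\<^bsub>G\<^esub> w = u} \<subseteq> {s\<in>S. s <#\<^bsub>G\<^esub> u = w}"
      using lcoset_inv_cancel[OF grp w] SG Sinv by auto
  qed (use inv_inv in auto)
  thus ?thesis unfolding schreier_adj_def by (rule bij_betw_same_card)
qed

lemma schreier_regular:
  assumes grp: "group G" and fin: "finite (carrier G)" and sg: "symmetric_generating_set G S"
    and H: "subgroup H G" and r: "card S = r"
  shows "regular_graph (schreier_vertices G H) (schreier_adj G S) r"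
proof -
  let ?V = "schreier_vertices G H"
  have SG: "S \<subseteq> carrier G" and finS: "finite S" using sg unfolding symmetric_generating_set_def by auto
  have sub: "u \<subseteq> carrier G" if "u \<in> ?V" for u
    using that subgroup.lcosets_carrier[OF H grp] unfolding schreier_vertices_def by blast
  have "\<one>\<^bsub>G\<^esub> \<in> carrier G" by (rule monoid.one_closed[OF group.is_monoid[OF grp]])
  hence "?V \<noteq> {}" unfolding schreier_vertices_def LCOSETS_def by blast
  moreover have "\<forall>u\<in>?V. \<forall>w. 0 < schreier_adj G S u w \<longrightarrow> w \<in> ?V"
  proof (intro ballI allI impI)
    fix u w assume u: "u \<in> ?V" and "0 < schreier_adj G S u w"
    then obtain s where "s \<in> S" "w = s <#\<^bsub>G\<^esub> u" using schreier_adj_pos_iff[OF finS, of G u w] by auto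
    thus "w \<in> ?V" using lcoset_in_lcosets[OF grp H] u SG unfolding schreier_vertices_def by blast
  qed
  moreover have "(\<Sum>w\<in>?V. schreier_adj G S u w) = r" if u: "u \<in> ?V" for u
  proof -
    have "real (\<Sum>w\<in>?V. schreier_adj G S u w) = (\<Sum>w\<in>?V. real (schreier_adj G S u w) * 1)" by simp
    also have "\<dots> = real r" using schreier_adj_apply[OF grp fin SG finS H u, of "\<lambda>_. 1"] r by simp
    finally show ?thesis by (simp only: of_nat_eq_iff)
  qed
  moreover have "\<forall>u\<in>?V. \<forall>w\<in>?V. schreier_adj G S u w = schreier_adj G S w u"
    using schreier_adj_sym[OF grp sg] sub by blast
  ultimately show ?thesis unfolding regular_graph_def using schreier_vertices_finite[OF fin] by blast
qed

lemma cayley_vertices_eq: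
  assumes grp: "group G"
  shows "cayley_vertices G = (\<lambda>x. {x}) ` carrier G"
  unfolding cayley_vertices_def schreier_vertices_def LCOSETS_def
  using grp by (auto simp: l_coset_def group.is_monoid monoid.r_one)

(* x |-> xN maps edges of the Cayley graph to edges of the Schreier graph, so the
   quotient of a connected Cayley graph is connected. *)
lemma schreier_connected:
  assumes grp: "group G" and sg: "symmetric_generating_set G S" and N: "subgroup N G"
    and conn: "connected_graph (cayley_vertices G) (schreier_adj G S)"
  shows "connected_graph (schreier_vertices G N) (schreier_adj G S)"
proof -
  let ?VC = "cayley_vertices G" and ?V = "schreier_vertices G N"
  let ?EC = "{(x, y). x \<in> ?VC \<and> y \<in> ?VC \<and> 0 < schreier_adj G S x y}"
  let ?E = "{(x, y). x \<in> ?V \<and> y \<in> ?V \<and> 0 < schreier_adj G S x y}"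
  have SG: "S \<subseteq> carrier G" and finS: "finite S" using sg unfolding symmetric_generating_set_def by auto
  define \<pi> where "\<pi> w = the_elem w <#\<^bsub>G\<^esub> N" for w
  have \<pi>_in: "\<pi> {x} \<in> ?V" if "x \<in> carrier G" for x
    unfolding \<pi>_def schreier_vertices_def LCOSETS_def using that by auto
  have edge: "(\<pi> p, \<pi> q) \<in> ?E" if pq: "(p, q) \<in> ?EC" for p q
  proof -
    obtain a where a: "a \<in> carrier G" "p = {a}" using pq cayley_vertices_eq[OF grp] by auto
    obtain s where s: "s \<in> S" "q = {s \<otimes>\<^bsub>G\<^esub> a}"
      using pq a schreier_adj_pos_iff[OF finS, of G p q] by (auto simp: lcoset_singleton)
    have sa: "s \<otimes>\<^bsub>G\<^esub> a \<in> carrier G"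
      using s(1) a(1) SG monoid.m_closed[OF group.is_monoid[OF grp]] by blast
    have "s <#\<^bsub>G\<^esub> \<pi> p = \<pi> q"
      unfolding \<pi>_def a s using group.lcos_m_assoc[OF grp subgroup.subset[OF N]] a SG s by auto
    hence "0 < schreier_adj G S (\<pi> p) (\<pi> q)" using schreier_adj_pos_iff[OF finS] s(1) by blast
    thus ?thesis using s a sa \<pi>_in by auto
  qed
  have path: "(\<pi> p, \<pi> q) \<in> ?E\<^sup>*" if "(p, q) \<in> ?EC\<^sup>*" for p q
    using that
  proof induction
    case (step y z)
    with edge show ?case by (meson rtrancl.rtrancl_into_rtrancl)
  qed simp
  show ?thesis unfolding connected_graph_def
  proof (intro ballI)
    fix u v assume "u \<in> ?V" "v \<in> ?V"
    then obtain x y where xy: "x \<in> carrier G" "y \<in> carrier G" "u = x <#\<^bsub>G\<^esub> N" "v = y <#\<^bsub>G\<^esub> N"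
      unfolding schreier_vertices_def LCOSETS_def by blast
    have "({x}, {y}) \<in> ?EC\<^sup>*" using conn xy cayley_vertices_eq[OF grp] unfolding connected_graph_def by blast
    from path[OF this] show "(u, v) \<in> ?E\<^sup>*" unfolding \<pi>_def using xy by simp
  qed
qed

(* Pulling back along x |-> xN: an eigenfunction F of the Schreier graph gives the
   eigenfunction x |-> F(xN) of the Cayley graph, with the same eigenvalue. *)
lemma schreier_eigenvalue_lifts:
  assumes grp: "group G" and fin: "finite (carrier G)" and sg: "symmetric_generating_set G S"
    and N: "subgroup N G" and eig: "lap_eigenvalue (schreier_vertices G N) (schreier_adj G S) r \<mu>"
  shows "lap_eigenvalue (cayley_vertices G) (schreier_adj G S) r \<mu>"
proof -
  let ?V = "schreier_vertices G N" and ?VC = "cayley_vertices G"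
  have SG: "S \<subseteq> carrier G" and finS: "finite S" using sg unfolding symmetric_generating_set_def by auto
  from eig obtain F where F0: "\<exists>v\<in>?V. F v \<noteq> 0"
    and Fe: "\<forall>v\<in>?V. real r * F v - (\<Sum>w\<in>?V. real (schreier_adj G S v w) * F w) = \<mu> * F v"
    unfolding lap_eigenvalue_def by blast
  define f where "f w = F (the_elem w <#\<^bsub>G\<^esub> N)" for w
  have coset_in: "x <#\<^bsub>G\<^esub> N \<in> ?V" if "x \<in> carrier G" for x
    unfolding schreier_vertices_def LCOSETS_def using that by auto
  have f_shift: "f (s <#\<^bsub>G\<^esub> {x}) = F (s <#\<^bsub>G\<^esub> (x <#\<^bsub>G\<^esub> N))" if "s \<in> S" "x \<in> carrier G" for s x
    using group.lcos_m_assoc[OF grp subgroup.subset[OF N]] that SG unfolding f_def lcoset_singleton by auto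
  have adj_f: "(\<Sum>w\<in>?VC. real (schreier_adj G S {x} w) * f w)
      = (\<Sum>w\<in>?V. real (schreier_adj G S (x <#\<^bsub>G\<^esub> N) w) * F w)" if x: "x \<in> carrier G" for x
  proof -
    have "{x} \<in> schreier_vertices G {\<one>\<^bsub>G\<^esub>}"
      using x cayley_vertices_eq[OF grp] unfolding cayley_vertices_def by auto
    hence "(\<Sum>w\<in>?VC. real (schreier_adj G S {x} w) * f w) = (\<Sum>s\<in>S. f (s <#\<^bsub>G\<^esub> {x}))"
      unfolding cayley_vertices_def by (rule schreier_adj_apply[OF grp fin SG finS group.triv_subgroup[OF grp]])
    also have "\<dots> = (\<Sum>s\<in>S. F (s <#\<^bsub>G\<^esub> (x <#\<^bsub>G\<^esub> N)))" using f_shift x by simp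
    also have "\<dots> = (\<Sum>w\<in>?V. real (schreier_adj G S (x <#\<^bsub>G\<^esub> N) w) * F w)"
      by (rule schreier_adj_apply[OF grp fin SG finS N coset_in[OF x], symmetric])
    finally show ?thesis .
  qed
  have "\<exists>v\<in>?VC. f v \<noteq> 0"
  proof -
    from F0 obtain x where "x \<in> carrier G" "F (x <#\<^bsub>G\<^esub> N) \<noteq> 0"
      unfolding schreier_vertices_def LCOSETS_def by blast
    thus ?thesis unfolding f_def using cayley_vertices_eq[OF grp] by force
  qed
  moreover have "\<forall>v\<in>?VC. real r * f v - (\<Sum>w\<in>?VC. real (schreier_adj G S v w) * f w) = \<mu> * f v"
    using adj_f Fe coset_in unfolding cayley_vertices_eq[OF grp] by (auto simp: f_def)
  ultimately show ?thesis unfolding lap_eigenvalue_def by blast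
qed

lemma card_cayley_vertices:
  assumes "group G"
  shows "card (cayley_vertices G) = card (carrier G)"
  unfolding cayley_vertices_eq[OF assms] by (rule card_image) (auto intro: inj_onI)

lemma card_schreier_vertices_le:
  assumes "finite (carrier G)"
  shows "card (schreier_vertices G N) \<le> card (carrier G)"
proof -
  have "schreier_vertices G N = (\<lambda>a. a <#\<^bsub>G\<^esub> N) ` carrier G"
    unfolding schreier_vertices_def LCOSETS_def by auto
  thus ?thesis using card_image_le[OF assms] by simp
qed

lemma schreier_lambda1_ge_cayley:
  assumes grp: "group G" and fin: "finite (carrier G)" and sg: "symmetric_generating_set G S"
    and N: "subgroup N G" and r: "card S = r"
    and conn: "connected_graph (schreier_vertices G N) (schreier_adj G S)"
    and card2: "2 \<le> card (schreier_vertices G N)"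
  shows "lambda1 (cayley_vertices G) (schreier_adj G S) r \<le> lambda1 (schreier_vertices G N) (schreier_adj G S) r"
proof (rule lambda1_antimono[OF _ schreier_regular[OF grp fin sg N r] conn card2])
  show "finite (cayley_vertices G)" unfolding cayley_vertices_def by (rule schreier_vertices_finite[OF fin])
qed (rule schreier_eigenvalue_lifts[OF grp fin sg N])

(* If log(2k) >= delta log(2g), then k bounded forces g bounded, so finiteness of the
   sublevel sets of g implies that of k. *)
lemma finite_sublevels_transfer:
  fixes g k :: "'i \<Rightarrow> nat" and \<delta> :: real
  assumes \<delta>: "\<delta> > 0" and fin: "\<And>n. finite {i \<in> I. g i \<le> n}"
    and pos: "\<And>i. i \<in> I \<Longrightarrow> 1 \<le> k i"
    and idx: "\<And>i. i \<in> I \<Longrightarrow> \<delta> * ln (2 * real (g i)) \<le> ln (2 * real (k i))"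
  shows "finite {i \<in> I. k i \<le> n}"
proof -
  define M where "M = nat \<lceil>exp (ln (2 * real n) / \<delta>)\<rceil>"
  have "g i \<le> M" if i: "i \<in> I" and kn: "k i \<le> n" for i
  proof (cases "g i = 0")
    case False
    have "ln (2 * real (g i)) \<le> ln (2 * real (k i)) / \<delta>"
      using idx[OF i] \<delta> by (simp add: pos_le_divide_eq mult.commute)
    also have "\<dots> \<le> ln (2 * real n) / \<delta>" using kn pos[OF i] \<delta> by (intro divide_right_mono) auto
    finally have "exp (ln (2 * real (g i))) \<le> exp (ln (2 * real n) / \<delta>)" by simp
    thus ?thesis using False unfolding M_def by simp linarith
  qed simp
  hence "{i \<in> I. k i \<le> n} \<subseteq> {i \<in> I. g i \<le> M}" by auto
  thus ?thesis using fin finite_subset by blast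
qed

lemma log_power_bound_transfer:
  fixes k g \<delta> c a :: real
  assumes \<delta>: "\<delta> > 0" and c: "c > 0" and a: "a \<ge> 0" and g2: "g \<ge> 2"
    and idx: "\<delta> * ln (2 * g) \<le> ln (2 * k)"
  shows "c * \<delta> powr a / ln (2 * k) powr a \<le> c / ln (2 * g) powr a"
proof -
  have lg: "ln (2 * g) > 0" using g2 by simp
  have le: "ln (2 * g) \<le> ln (2 * k) / \<delta>" using idx \<delta> by (simp add: pos_le_divide_eq mult.commute)
  have lk: "ln (2 * k) > 0" using lg le \<delta> by (smt (verit) divide_nonpos_pos)
  have "ln (2 * g) powr a \<le> (ln (2 * k) / \<delta>) powr a" by (rule powr_mono2[OF a]) (use lg le in auto)
  also have "\<dots> = ln (2 * k) powr a / \<delta> powr a" using lk \<delta> by (simp add: powr_divide)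
  finally have "ln (2 * g) powr a \<le> ln (2 * k) powr a / \<delta> powr a" .
  hence "c / (ln (2 * k) powr a / \<delta> powr a) \<le> c / ln (2 * g) powr a"
    by (rule divide_left_mono) (use c lg lk \<delta> in auto)
  thus ?thesis by simp
qed

theorem proposition3p2:
  fixes I :: "'i set"
    and G :: "'i \<Rightarrow> ('g, 'b) monoid_scheme"
    and S :: "'i \<Rightarrow> 'g set"
    and N :: "'i \<Rightarrow> 'g set"
    and r :: nat
    and \<delta> :: real
  assumes groups: "\<forall>i\<in>I. group (G i) \<and> finite (carrier (G i))"
    and gens: "\<forall>i\<in>I. symmetric_generating_set (G i) (S i) \<and> card (S i) = r"
    and esp: "esperantist I (\<lambda>i. cayley_vertices (G i)) (\<lambda>i. schreier_adj (G i) (S i)) r"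
    and subgrps: "\<forall>i\<in>I. subgroup (N i) (G i)"
    and delta_pos: "\<delta> > 0"
    and index: "\<forall>i\<in>I. ln (2 * real (card (lcosets\<^bsub>G i\<^esub> (N i))))
                        \<ge> \<delta> * ln (2 * real (card (carrier (G i))))"
  shows "esperantist I (\<lambda>i. schreier_vertices (G i) (N i)) (\<lambda>i. schreier_adj (G i) (S i)) r"
proof -
  let ?VC = "\<lambda>i. cayley_vertices (G i)" and ?V = "\<lambda>i. schreier_vertices (G i) (N i)"
    and ?A = "\<lambda>i. schreier_adj (G i) (S i)"
  obtain c a where c: "c > 0" and a: "a \<ge> 0"
    and bound: "\<And>i. i \<in> I \<Longrightarrow> 2 \<le> card (?VC i) \<Longrightarrow>
                  c / ln (2 * real (card (?VC i))) powr a \<le> lambda1 (?VC i) (?A i) r"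
    using esp unfolding esperantist_def by blast
  have reg: "regular_graph (?V i) (?A i) r" and conn: "connected_graph (?V i) (?A i)" if i: "i \<in> I" for i
    using schreier_regular[of "G i" "S i" "N i" r] schreier_connected[of "G i" "S i" "N i"]
      groups gens subgrps esp i unfolding esperantist_def by auto
  have idx: "\<delta> * ln (2 * real (card (?VC i))) \<le> ln (2 * real (card (?V i)))" if "i \<in> I" for i
    using index that card_cayley_vertices[of "G i"] groups unfolding schreier_vertices_def by simp
  have "finite {i \<in> I. card (?V i) \<le> n}" for n
  proof (rule finite_sublevels_transfer[OF delta_pos _ _ idx])
    show "finite {i \<in> I. card (?VC i) \<le> m}" for m using esp unfolding esperantist_def by blast
    show "1 \<le> card (?V i)" if "i \<in> I" for i
      using reg[OF that] unfolding regular_graph_def by (simp add: Suc_le_eq card_gt_0_iff)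
  qed
  moreover have "c * \<delta> powr a / ln (2 * real (card (?V i))) powr a \<le> lambda1 (?V i) (?A i) r"
    if i: "i \<in> I" and card2: "2 \<le> card (?V i)" for i
  proof -
    have "card (?V i) \<le> card (?VC i)"
      using card_schreier_vertices_le card_cayley_vertices groups i by metis
    hence "c * \<delta> powr a / ln (2 * real (card (?V i))) powr a \<le> lambda1 (?VC i) (?A i) r"
      using log_power_bound_transfer[OF delta_pos c a _ idx[OF i]] bound[OF i] card2 by force
    also have "\<dots> \<le> lambda1 (?V i) (?A i) r"
      using schreier_lambda1_ge_cayley[OF _ _ _ _ _ conn[OF i] card2] groups gens subgrps i by blast
    finally show ?thesis .
  qed
  moreover have "c * \<delta> powr a > 0" using c delta_pos by simp
  ultimately show ?thesis unfolding esperantist_def using reg conn a by blast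
qed

end
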